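(* Let $\omega:\mathbb N\to[1,\infty)$ be a weight on $\mathbb N_{\min}$ with $\sup_n\min(\omega(n),\omega(n+1))=+\infty$. Then $(\ell^1_\omega(\mathbb N_{\min}),M_2(\mathbb C))$ is not an AMNM pair.
   Context: $\mathbb N_{\min}$ is the semilattice $\mathbb N$ with product $\min$; every $\omega:\mathbb N\to[1,\infty)$ is a submultiplicative weight on it. $\ell^1_\omega(\mathbb N_{\min})$ is the Banach space of $a:\mathbb N\to\mathbb C$ with $\|a\|=\sum_n|a(n)|\omega(n)<\infty$, with convolution $\delta_m*\delta_n=\delta_{\min(m,n)}$. $M_2(\mathbb C)$ has the operator norm. For a bounded linear $T:A\to B$ between Banach algebras, $\operatorname{def}(T)=\sup\{\|T(xy)-T(x)T(y)\|:\|x\|,\|y\|\le1\}$ and $\operatorname{Mult}(A,B)$ is the set of bounded multiplicative linear maps (including $0$). $(A,B)$ is an AMNM pair if for every $K>0$, $\varepsilon>0$ there is $\delta>0$ such that every bounded linear $T:A\to B$ with $\|T\|\le K$ and $\operatorname{def}(T)\le\delta$ satisfies $\operatorname{dist}(T,\operatorname{Mult}(A,B))\le\varepsilon$ in operator norm. *)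

theory Defs
  imports "HOL-Analysis.Analysis"
begin

definition l1w :: "(nat \<Rightarrow> real) \<Rightarrow> (nat \<Rightarrow> complex) set" where
  "l1w \<omega> = {a. summable (\<lambda>n. norm (a n) * \<omega> n)}"

definition wnorm :: "(nat \<Rightarrow> real) \<Rightarrow> (nat \<Rightarrow> complex) \<Rightarrow> real" where
  "wnorm \<omega> a = (\<Sum>n. norm (a n) * \<omega> n)"

text \<open>Convolution on N_min: delta_m * delta_n = delta_(min m n), extended bilinearly.\<close>
definition minconv :: "(nat \<Rightarrow> complex) \<Rightarrow> (nat \<Rightarrow> complex) \<Rightarrow> nat \<Rightarrow> complex" where
  "minconv a b k = infsum (\<lambda>(m, n). a m * b n) {(m, n). min m n = k}"

text \<open>Operator norm on M_2(C), with C^2 carrying the Euclidean norm.\<close>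
definition mnorm :: "complex^2^2 \<Rightarrow> real" where
  "mnorm A = onorm (\<lambda>x::complex^2. A *v x)"

definition unit_ball_l1w :: "(nat \<Rightarrow> real) \<Rightarrow> (nat \<Rightarrow> complex) set" where
  "unit_ball_l1w \<omega> = {a \<in> l1w \<omega>. wnorm \<omega> a \<le> 1}"

text \<open>Bounded (complex-)linear maps ell^1_omega(N_min) -> M_2(C) (only values on l1w matter).\<close>
definition bdd_lin :: "(nat \<Rightarrow> real) \<Rightarrow> ((nat \<Rightarrow> complex) \<Rightarrow> complex^2^2) \<Rightarrow> bool" where
  "bdd_lin \<omega> T \<longleftrightarrow>
     (\<forall>a\<in>l1w \<omega>. \<forall>b\<in>l1w \<omega>. T (\<lambda>n. a n + b n) = T a + T b) \<and>
     (\<forall>a\<in>l1w \<omega>. \<forall>c::complex. T (\<lambda>n. c * a n) = (\<chi> i j. c * (T a $ i $ j))) \<and>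
     (\<exists>K. \<forall>a\<in>l1w \<omega>. mnorm (T a) \<le> K * wnorm \<omega> a)"

definition opn :: "(nat \<Rightarrow> real) \<Rightarrow> ((nat \<Rightarrow> complex) \<Rightarrow> complex^2^2) \<Rightarrow> real" where
  "opn \<omega> T = (SUP a\<in>unit_ball_l1w \<omega>. mnorm (T a))"

definition mult_defect :: "(nat \<Rightarrow> real) \<Rightarrow> ((nat \<Rightarrow> complex) \<Rightarrow> complex^2^2) \<Rightarrow> real" where
  "mult_defect \<omega> T = Sup {mnorm (T (minconv a b) - T a ** T b) | a b.
                           a \<in> unit_ball_l1w \<omega> \<and> b \<in> unit_ball_l1w \<omega>}"

definition Mult :: "(nat \<Rightarrow> real) \<Rightarrow> ((nat \<Rightarrow> complex) \<Rightarrow> complex^2^2) set" where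
  "Mult \<omega> = {S. bdd_lin \<omega> S \<and>
               (\<forall>a\<in>l1w \<omega>. \<forall>b\<in>l1w \<omega>. S (minconv a b) = S a ** S b)}"

definition dist_Mult :: "(nat \<Rightarrow> real) \<Rightarrow> ((nat \<Rightarrow> complex) \<Rightarrow> complex^2^2) \<Rightarrow> real" where
  "dist_Mult \<omega> T = (INF S\<in>Mult \<omega>. opn \<omega> (\<lambda>a. T a - S a))"

definition AMNM_pair :: "(nat \<Rightarrow> real) \<Rightarrow> bool" where
  "AMNM_pair \<omega> \<longleftrightarrow>
    (\<forall>K>0. \<forall>\<epsilon>>0. \<exists>\<delta>>0. \<forall>T. bdd_lin \<omega> T \<and> opn \<omega> T \<le> K \<and> mult_defect \<omega> T \<le> \<delta>
        \<longrightarrow> dist_Mult \<omega> T \<le> \<epsilon>)"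

end

theory Submission
  imports Defs
begin

text \<open>
  For each \<open>n\<close> we build a map
  \<open>T\<^sub>n(a) = \<phi>(a) I + \<psi>(a) E\<^sub>1\<^sub>2\<close> from \<open>\<ell>\<^sup>1\<^sub>\<omega>(\<nat>\<^sub>m\<^sub>i\<^sub>n)\<close> to \<open>M\<^sub>2(\<complex>)\<close>, where \<open>\<phi>(a) = \<Sum>\<^sub>k\<^sub>\<ge>\<^sub>n\<^sub>+\<^sub>2 a\<^sub>k\<close> is a
  character and \<open>\<psi>(a) = \<omega>(n) a\<^sub>n - \<omega>(n+1) a\<^sub>n\<^sub>+\<^sub>1\<close>. Then
  \<^item> \<open>\<parallel>T\<^sub>n\<parallel> \<le> 2\<close>;
  \<^item> the multiplicative defect of \<open>T\<^sub>n\<close> is at most \<open>4 / min(\<omega>(n), \<omega>(n+1))\<close>, since only products of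
    the coordinates \<open>n, n+1\<close> contribute to it;
  \<^item> \<open>T\<^sub>n\<close> has distance at least \<open>1/2\<close> from every multiplicative map \<open>S\<close>: the matrices
    \<open>P = S(\<delta>\<^sub>n)\<close> and \<open>Q = S(\<delta>\<^sub>n\<^sub>+\<^sub>1)\<close> are idempotents with \<open>PQ = QP = P\<close>, which forces equal
    upper right entries, whereas closeness to \<open>T\<^sub>n\<close> would force them to have real parts of
    opposite signs.
  Choosing \<open>n\<close> with \<open>min(\<omega>(n), \<omega>(n+1))\<close> large gives maps of norm \<open>\<le> 2\<close>, arbitrarily small defect
  and distance \<open>\<ge> 1/2\<close> from \<open>Mult\<close>, so the pair is not AMNM.
\<close>

section \<open>The operator norm on 2x2 complex matrices\<close>

lemma mnorm_bounded_linear: "bounded_linear (\<lambda>x::complex^2. A *v x)"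
  by (simp add: linear_conv_bounded_linear)

lemma entry_le_mnorm: "norm (A $ i $ j) \<le> mnorm A"
proof -
  have e: "axis j (1::complex) \<in> Basis" by (auto simp: Basis_vec_def Basis_complex_def)
  have "A $ i $ j = (A *v axis j 1) $ i"
    by (simp add: matrix_vector_mult_def axis_def if_distrib cong: if_cong)
  also have "norm \<dots> \<le> norm (A *v axis j 1)"
    by (rule Finite_Cartesian_Product.norm_nth_le)
  also have "\<dots> \<le> mnorm A * norm (axis j (1::complex))"
    unfolding mnorm_def by (rule onorm[OF mnorm_bounded_linear])
  finally show ?thesis using norm_Basis[OF e] by simp
qed

lemma mnorm_le_entries:
  "mnorm A \<le> norm (A$1$1) + norm (A$1$2) + norm (A$2$1) + norm (A$2$2)"
proof -
  have "mnorm A \<le> (\<Sum>i\<in>UNIV. \<Sum>j\<in>UNIV. norm (A $ i $ j))"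
    unfolding mnorm_def
  proof (rule onorm_le)
    fix x :: "complex^2"
    have row: "norm ((A *v x) $ i) \<le> (\<Sum>j\<in>UNIV. norm (A $ i $ j) * norm x)" for i
    proof -
      have "norm ((A *v x) $ i) = norm (\<Sum>j\<in>UNIV. A $ i $ j * x $ j)"
        by (simp add: matrix_vector_mult_def)
      also have "\<dots> \<le> (\<Sum>j\<in>UNIV. norm (A $ i $ j * x $ j))" by (rule norm_sum)
      also have "\<dots> \<le> (\<Sum>j\<in>UNIV. norm (A $ i $ j) * norm x)"
        by (rule sum_mono)
          (simp add: norm_mult mult_left_mono[OF Finite_Cartesian_Product.norm_nth_le])
      finally show ?thesis .
    qed
    have "norm (A *v x) \<le> (\<Sum>i\<in>UNIV. norm ((A *v x) $ i))"
      by (simp add: norm_vec_def L2_set_le_sum)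
    also have "\<dots> \<le> (\<Sum>i\<in>UNIV. \<Sum>j\<in>UNIV. norm (A $ i $ j) * norm x)"
      by (rule sum_mono[OF row])
    also have "\<dots> = (\<Sum>i\<in>UNIV. \<Sum>j\<in>UNIV. norm (A $ i $ j)) * norm x"
      by (simp add: sum_distrib_right)
    finally show "norm (A *v x) \<le> (\<Sum>i\<in>UNIV. \<Sum>j\<in>UNIV. norm (A $ i $ j)) * norm x" .
  qed
  then show ?thesis by (simp add: sum_2)
qed

lemma mnorm_diff_le: "mnorm (A - B) \<le> mnorm A + mnorm B"
proof -
  have "onorm (\<lambda>x::complex^2. A *v x + - (B *v x))
          \<le> onorm (\<lambda>x. A *v x) + onorm (\<lambda>x. - (B *v x))"
    by (intro onorm_triangle mnorm_bounded_linear bounded_linear_minus)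
  then show ?thesis by (simp add: mnorm_def onorm_neg matrix_vector_mult_diff_rdistrib)
qed


section \<open>Absolutely summable sequences, tail sums and min-convolution\<close>

lemma norm_summable_on_subset:
  fixes a :: "nat \<Rightarrow> complex"
  assumes "(\<lambda>n. norm (a n)) summable_on UNIV"
  shows "a summable_on A"
  by (rule summable_on_subset_banach[OF abs_summable_summable[OF assms]]) simp

lemma product_summable_on:
  fixes a b :: "nat \<Rightarrow> complex"
  assumes a: "(\<lambda>n. norm (a n)) summable_on UNIV" and b: "(\<lambda>n. norm (b n)) summable_on UNIV"
  shows "(\<lambda>(i,j). a i * b j) summable_on A"
proof -
  have "(\<lambda>p. norm ((\<lambda>(i,j). a i * b j) p)) summable_on Sigma UNIV (\<lambda>_. UNIV)"
  proof (rule Infinite_Sum.abs_summable_on_Sigma_iff[THEN iffD2], intro conjI ballI)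
    fix i :: nat
    show "(\<lambda>j. norm ((\<lambda>(i,j). a i * b j) (i, j))) summable_on UNIV"
      using summable_on_cmult_right[OF b, of "norm (a i)"] by (simp add: norm_mult)
  next
    have "(\<Sum>\<^sub>\<infinity>j. norm ((\<lambda>(i,j). a i * b j) (i, j))) = norm (a i) * (\<Sum>\<^sub>\<infinity>j. norm (b j))" for i
      by (simp add: norm_mult infsum_cmult_right')
    then show "(\<lambda>i. norm (\<Sum>\<^sub>\<infinity>j. norm ((\<lambda>(i,j). a i * b j) (i, j)))) summable_on UNIV"
      using summable_on_cmult_left[OF a] by (simp add: infsum_nonneg)
  qed
  then have "(\<lambda>(i,j). a i * b j) summable_on UNIV"
    using abs_summable_summable by fastforce
  then show ?thesis by (rule summable_on_subset_banach) simp
qed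

text \<open>The tail sum \<open>\<Sum>\<^sub>k\<^sub>\<ge>\<^sub>m a k\<close>: for each \<open>m\<close> this is a character of \<open>\<ell>\<^sup>1(\<nat>\<^sub>m\<^sub>i\<^sub>n)\<close>
  (lemma \<open>tail_sum_minconv\<close>); the counterexample maps are built from it.\<close>
definition tail_sum :: "(nat \<Rightarrow> complex) \<Rightarrow> nat \<Rightarrow> complex" where
  "tail_sum a m = infsum a {m..}"

lemma tail_sum_Suc:
  assumes "(\<lambda>n. norm (a n)) summable_on UNIV"
  shows "tail_sum a k = a k + tail_sum a (Suc k)"
proof -
  have "{k..} = insert k {Suc k..}" by auto
  then show ?thesis unfolding tail_sum_def
    using infsum_insert[OF norm_summable_on_subset[OF assms], of k "{Suc k..}"] by simp
qed

text \<open>Coordinates of a min-convolution: the pairs with \<open>min m n = k\<close> are \<open>{k} \<times> {k..}\<close> and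
  \<open>{k+1..} \<times> {k}\<close>.\<close>
lemma minconv_eq:
  fixes a b :: "nat \<Rightarrow> complex"
  assumes a: "(\<lambda>n. norm (a n)) summable_on UNIV" and b: "(\<lambda>n. norm (b n)) summable_on UNIV"
  shows "minconv a b k = a k * tail_sum b k + b k * tail_sum a (Suc k)"
proof -
  define F where "F = (\<lambda>(i,j). a i * b j)"
  have F: "F summable_on A" for A
    unfolding F_def by (rule product_summable_on[OF a b])
  have split: "{(m, n). min m n = k} = Sigma {k} (\<lambda>_. {k..}) \<union> Sigma {Suc k..} (\<lambda>_. {k})"
    by auto
  have "minconv a b k = infsum F {(m, n). min m n = k}"
    by (simp add: minconv_def F_def)
  also have "\<dots> = infsum F (Sigma {k} (\<lambda>_. {k..})) + infsum F (Sigma {Suc k..} (\<lambda>_. {k}))"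
    unfolding split by (rule infsum_Un_disjoint[OF F F]) auto
  also have "infsum F (Sigma {k} (\<lambda>_. {k..})) = (\<Sum>\<^sub>\<infinity>j\<in>{k..}. a k * b j)"
    by (subst infsum_Sigma_banach[symmetric, OF F]) (simp add: F_def)
  also have "infsum F (Sigma {Suc k..} (\<lambda>_. {k})) = (\<Sum>\<^sub>\<infinity>i\<in>{Suc k..}. a i * b k)"
    by (subst infsum_Sigma_banach[symmetric, OF F]) (simp add: F_def)
  finally show ?thesis
    by (simp add: tail_sum_def infsum_cmult_right' infsum_cmult_left' mult.commute)
qed

text \<open>Tail sums are multiplicative: \<open>{(i,j). min i j \<ge> m} = {m..} \<times> {m..}\<close>.\<close>
lemma tail_sum_minconv:
  fixes a b :: "nat \<Rightarrow> complex"
  assumes a: "(\<lambda>n. norm (a n)) summable_on UNIV" and b: "(\<lambda>n. norm (b n)) summable_on UNIV"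
  shows "tail_sum (minconv a b) m = tail_sum a m * tail_sum b m"
proof -
  define F where "F = (\<lambda>(i,j). a i * b j)"
  have F: "F summable_on A" for A
    unfolding F_def by (rule product_summable_on[OF a b])
  define B where "B = (\<lambda>k::nat. {(i::nat, j::nat). min i j = k})"
  have inj: "inj_on snd (Sigma {m..} B)" by (auto simp: inj_on_def B_def)
  have img: "snd ` Sigma {m..} B = Sigma {m..} (\<lambda>_. {m..})"
  proof (rule set_eqI, rule iffI)
    fix p assume "p \<in> Sigma {m..} (\<lambda>_. {m..})"
    then have "(min (fst p) (snd p), p) \<in> Sigma {m..} B" by (auto simp: B_def)
    then show "p \<in> snd ` Sigma {m..} B" by (rule image_eqI[rotated]) simp
  qed (auto simp: B_def)
  have Fs: "(\<lambda>(k, p). F p) summable_on Sigma {m..} B"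
    using summable_on_reindex[OF inj, of F] F by (simp add: o_def case_prod_unfold)
  have "tail_sum (minconv a b) m = (\<Sum>\<^sub>\<infinity>k\<in>{m..}. infsum F (B k))"
    unfolding tail_sum_def F_def B_def by (simp add: minconv_def[abs_def])
  also have "\<dots> = infsum (\<lambda>(k, p). F p) (Sigma {m..} B)"
    by (rule infsum_Sigma'_banach[OF Fs])
  also have "\<dots> = infsum F (snd ` Sigma {m..} B)"
    using infsum_reindex[OF inj, of F] by (simp add: o_def case_prod_unfold)
  also have "\<dots> = (\<Sum>\<^sub>\<infinity>i\<in>{m..}. \<Sum>\<^sub>\<infinity>j\<in>{m..}. F (i, j))"
    unfolding img by (rule infsum_Sigma_banach[symmetric, OF F])
  also have "\<dots> = tail_sum a m * tail_sum b m"
    by (simp add: F_def tail_sum_def infsum_cmult_right' infsum_cmult_left')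
  finally show ?thesis .
qed

definition point_mass :: "nat \<Rightarrow> nat \<Rightarrow> complex" where
  "point_mass j = (\<lambda>k. if k = j then 1 else 0)"

lemma point_mass_norm_summable: "(\<lambda>n. norm (point_mass j n)) summable_on UNIV"
proof -
  have "(\<lambda>n. norm (point_mass j n)) summable_on {j}" by simp
  then show ?thesis
    by (rule summable_on_cong_neutral[THEN iffD1, rotated -1]) (auto simp: point_mass_def)
qed

lemma tail_sum_point_mass: "tail_sum (point_mass j) k = (if k \<le> j then 1 else 0)"
proof -
  have "tail_sum (point_mass j) k = infsum (point_mass j) (if k \<le> j then {j} else {})"
    unfolding tail_sum_def by (rule infsum_cong_neutral) (auto simp: point_mass_def)
  then show ?thesis by (simp add: point_mass_def)
qed

lemma minconv_point_mass: "minconv (point_mass i) (point_mass j) = point_mass (min i j)"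
proof
  fix k
  show "minconv (point_mass i) (point_mass j) k = point_mass (min i j) k"
    by (simp add: minconv_eq[OF point_mass_norm_summable point_mass_norm_summable]
        tail_sum_point_mass) (auto simp: point_mass_def)
qed


section \<open>The weighted space \<open>\<ell>\<^sup>1\<^sub>\<omega>(\<nat>\<^sub>m\<^sub>i\<^sub>n)\<close>\<close>

lemma wnorm_has_sum:
  assumes a: "a \<in> l1w \<omega>" and w: "\<forall>n. 0 \<le> \<omega> n"
  shows "((\<lambda>n. norm (a n) * \<omega> n) has_sum wnorm \<omega> a) UNIV"
  unfolding wnorm_def
  using a w by (intro sums_nonneg_imp_has_sum summable_sums) (auto simp: l1w_def)

lemma wnorm_nonneg:
  assumes "a \<in> l1w \<omega>" "\<forall>n. 0 \<le> \<omega> n"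
  shows "0 \<le> wnorm \<omega> a"
  using has_sum_nonneg[OF wnorm_has_sum[OF assms]] assms(2) by simp

lemma coord_le_wnorm:
  assumes "a \<in> l1w \<omega>" "\<forall>n. 0 \<le> \<omega> n"
  shows "norm (a k) * \<omega> k \<le> wnorm \<omega> a"
  using has_sum_mono2[OF has_sum_finite[of "{k}"] wnorm_has_sum[OF assms]] assms(2) by simp

lemma l1w_norm_summable:
  assumes w: "\<forall>n. \<omega> n \<ge> 1" and a: "a \<in> l1w \<omega>"
  shows "(\<lambda>n. norm (a n)) summable_on UNIV"
proof -
  have "summable (\<lambda>n. norm (a n))"
  proof (rule summable_comparison_test'[of "\<lambda>n. norm (a n) * \<omega> n"])
    show "summable (\<lambda>n. norm (a n) * \<omega> n)" using a by (simp add: l1w_def)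
    show "norm (norm (a n)) \<le> norm (a n) * \<omega> n" for n
      using w mult_left_mono[of 1 "\<omega> n" "norm (a n)"] by simp
  qed
  then show ?thesis by (intro norm_summable_imp_summable_on) simp
qed

lemma point_mass_in_l1w: "point_mass j \<in> l1w \<omega>"
  unfolding l1w_def mem_Collect_eq
  by (rule summable_finite[of "{j}"]) (auto simp: point_mass_def)

lemma scaled_point_mass_in_unit_ball:
  assumes w: "\<forall>n. 0 < \<omega> n"
  shows "(\<lambda>k. complex_of_real (1 / \<omega> j) * point_mass j k) \<in> unit_ball_l1w \<omega>"
proof -
  define u where "u = (\<lambda>k. complex_of_real (1 / \<omega> j) * point_mass j k)"
  have "norm (u j) * \<omega> j = 1"
    using w[rule_format, of j] by (simp add: u_def point_mass_def norm_divide)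
  then have fin: "((\<lambda>n. norm (u n) * \<omega> n) has_sum 1) {j}"
    using has_sum_finite[of "{j}" "\<lambda>n. norm (u n) * \<omega> n"] by simp
  have "((\<lambda>n. norm (u n) * \<omega> n) has_sum 1) UNIV"
    by (rule has_sum_cong_neutral[THEN iffD1, OF _ _ _ fin]) (auto simp: u_def point_mass_def)
  moreover have ul: "u \<in> l1w \<omega>"
    unfolding l1w_def mem_Collect_eq u_def
    by (rule summable_finite[of "{j}"]) (auto simp: point_mass_def)
  ultimately have "wnorm \<omega> u = 1"
    using has_sum_unique wnorm_has_sum[OF ul] w less_imp_le by blast
  then show ?thesis using ul by (simp add: unit_ball_l1w_def u_def)
qed

lemma zero_in_unit_ball: "(\<lambda>k. 0) \<in> unit_ball_l1w \<omega>"
  by (simp add: unit_ball_l1w_def l1w_def wnorm_def)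

text \<open>The norm splits as \<open>\<dots> + |a\<^sub>n| \<omega>(n) + |a\<^sub>n\<^sub>+\<^sub>1| \<omega>(n+1) + (tail from n+2)\<close>, and the tail
  sum from \<open>n+2\<close> is dominated by the corresponding part of the norm.\<close>
lemma tail_bound:
  assumes w: "\<forall>n. \<omega> n \<ge> 1" and a: "a \<in> l1w \<omega>"
  shows "norm (tail_sum a (n+2)) + norm (a n) * \<omega> n + norm (a (Suc n)) * \<omega> (Suc n)
           \<le> wnorm \<omega> a"
proof -
  define g where "g = (\<lambda>n. norm (a n) * \<omega> n)"
  have w0: "\<forall>n. 0 \<le> \<omega> n" using w by (auto intro: order_trans[OF zero_le_one])
  have hs: "(g has_sum wnorm \<omega> a) UNIV" unfolding g_def by (rule wnorm_has_sum[OF a w0])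
  have gs: "g summable_on A" for A
    using hs summable_on_subset_banach has_sum_imp_summable by blast
  have gn: "0 \<le> g k" for k unfolding g_def using w0 by simp
  have peel: "infsum g {k..} = g k + infsum g {Suc k..}" for k
  proof -
    have "{k..} = insert k {Suc k..}" by auto
    then show ?thesis using infsum_insert[OF gs, of k "{Suc k..}"] by simp
  qed
  have ns: "(\<lambda>k. norm (a k)) summable_on A" for A
    by (rule summable_on_subset_banach[OF l1w_norm_summable[OF w a]]) simp
  have "norm (tail_sum a (n+2)) \<le> infsum (\<lambda>k. norm (a k)) {n+2..}"
    unfolding tail_sum_def by (rule norm_infsum_bound[OF ns])
  also have "\<dots> \<le> infsum g {n+2..}"
    by (rule infsum_mono[OF ns gs])
      (use w mult_left_mono[of 1 "\<omega> _" "norm (a _)"] in \<open>simp add: g_def\<close>)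
  also have "\<dots> = infsum g {n..} - g n - g (Suc n)"
    using peel[of n] peel[of "Suc n"] by simp
  also have "infsum g {n..} \<le> wnorm \<omega> a"
    using infsum_mono2[OF gs gs, of "{n..}" UNIV] gn infsumI[OF hs] by simp
  finally show ?thesis by (simp add: g_def)
qed


lemma bdd_lin_bounded_on_unit_ball:
  assumes S: "bdd_lin \<omega> S" and w: "\<forall>n. 0 \<le> \<omega> n"
  obtains C where "\<And>a. a \<in> unit_ball_l1w \<omega> \<Longrightarrow> mnorm (S a) \<le> C"
proof -
  obtain K where K: "\<And>a. a \<in> l1w \<omega> \<Longrightarrow> mnorm (S a) \<le> K * wnorm \<omega> a"
    using S unfolding bdd_lin_def by blast
  have "mnorm (S a) \<le> \<bar>K\<bar>" if "a \<in> unit_ball_l1w \<omega>" for a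
  proof -
    from that have a: "a \<in> l1w \<omega>" and a1: "wnorm \<omega> a \<le> 1" by (auto simp: unit_ball_l1w_def)
    have a0: "0 \<le> wnorm \<omega> a" by (rule wnorm_nonneg[OF a w])
    have "mnorm (S a) \<le> K * wnorm \<omega> a" by (rule K[OF a])
    also have "\<dots> \<le> \<bar>K\<bar> * wnorm \<omega> a" using a0 by (simp add: mult_right_mono)
    also have "\<dots> \<le> \<bar>K\<bar>" using a0 a1 mult_left_mono[of "wnorm \<omega> a" 1 "\<bar>K\<bar>"] by simp
    finally show ?thesis .
  qed
  then show thesis by (rule that)
qed

lemma mnorm_le_opn:
  assumes "\<And>a. a \<in> unit_ball_l1w \<omega> \<Longrightarrow> mnorm (F a) \<le> C" and "u \<in> unit_ball_l1w \<omega>"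
  shows "mnorm (F u) \<le> opn \<omega> F"
  unfolding opn_def by (rule cSUP_upper[OF assms(2) bdd_aboveI2[OF assms(1)]])

lemma opn_le:
  assumes "\<And>a. a \<in> unit_ball_l1w \<omega> \<Longrightarrow> mnorm (F a) \<le> C"
  shows "opn \<omega> F \<le> C"
  unfolding opn_def by (rule cSUP_least) (use assms zero_in_unit_ball in auto)

lemma mult_defect_le:
  assumes "\<And>a b. a \<in> unit_ball_l1w \<omega> \<Longrightarrow> b \<in> unit_ball_l1w \<omega> \<Longrightarrow>
             mnorm (T (minconv a b) - T a ** T b) \<le> C"
  shows "mult_defect \<omega> T \<le> C"
  unfolding mult_defect_def by (rule cSup_least) (use assms zero_in_unit_ball in blast)+

lemma zero_in_Mult: "(\<lambda>a. 0) \<in> Mult \<omega>"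
proof -
  have "mnorm 0 \<le> 0" using mnorm_le_entries[of 0] by simp
  then show ?thesis unfolding Mult_def bdd_lin_def by (auto simp: vec_eq_iff intro: exI[of _ 0])
qed

lemma not_AMNM_pairI:
  assumes "0 < K" "0 < \<epsilon>"
    and "\<And>\<delta>. 0 < \<delta> \<Longrightarrow>
           \<exists>T. bdd_lin \<omega> T \<and> opn \<omega> T \<le> K \<and> mult_defect \<omega> T \<le> \<delta> \<and> \<epsilon> < dist_Mult \<omega> T"
  shows "\<not> AMNM_pair \<omega>"
proof
  assume "AMNM_pair \<omega>"
  then obtain \<delta> where "0 < \<delta>" and "\<forall>T. bdd_lin \<omega> T \<and> opn \<omega> T \<le> K \<and> mult_defect \<omega> T \<le> \<delta>
                                         \<longrightarrow> dist_Mult \<omega> T \<le> \<epsilon>"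
    using assms(1,2) unfolding AMNM_pair_def by blast
  then show False using assms(3)[of \<delta>] by force
qed

section \<open>The almost multiplicative maps\<close>

text \<open>For fixed \<open>n\<close> let \<open>\<phi>(a) = \<Sum>\<^sub>k\<^sub>\<ge>\<^sub>n\<^sub>+\<^sub>2 a\<^sub>k\<close> (a character) and
  \<open>\<psi>(a) = \<omega>(n) a\<^sub>n - \<omega>(n+1) a\<^sub>n\<^sub>+\<^sub>1\<close>, and put \<open>T(a) = \<phi>(a) I + \<psi>(a) E\<^sub>1\<^sub>2\<close>.
  The map \<open>\<psi>\<close> fails to be a point derivation at \<open>\<phi>\<close> only through products of the coordinates
  \<open>n, n+1\<close>, which are \<open>O(1/min(\<omega>(n), \<omega>(n+1)))\<close> on the unit ball.\<close>
definition near_hom :: "(nat \<Rightarrow> real) \<Rightarrow> nat \<Rightarrow> (nat \<Rightarrow> complex) \<Rightarrow> complex^2^2" where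
  "near_hom \<omega> n a = (\<chi> i j. if i = j then tail_sum a (n+2)
      else if i = 1 \<and> j = 2 then complex_of_real (\<omega> n) * a n - complex_of_real (\<omega> (Suc n)) * a (Suc n)
      else 0)"

lemma near_hom_entries:
  "near_hom \<omega> n a $ 1 $ 1 = tail_sum a (n+2)"
  "near_hom \<omega> n a $ 2 $ 2 = tail_sum a (n+2)"
  "near_hom \<omega> n a $ 1 $ 2 = complex_of_real (\<omega> n) * a n - complex_of_real (\<omega> (Suc n)) * a (Suc n)"
  "near_hom \<omega> n a $ 2 $ 1 = 0"
  by (simp_all add: near_hom_def)

lemma mnorm_near_hom:
  assumes w: "\<forall>n. \<omega> n \<ge> 1" and a: "a \<in> l1w \<omega>"
  shows "mnorm (near_hom \<omega> n a) \<le> 2 * wnorm \<omega> a"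
proof -
  have w0: "0 \<le> \<omega> k" for k using w by (auto intro: order_trans[OF zero_le_one])
  have "norm (complex_of_real (\<omega> n) * a n - complex_of_real (\<omega> (Suc n)) * a (Suc n))
      \<le> norm (complex_of_real (\<omega> n) * a n) + norm (complex_of_real (\<omega> (Suc n)) * a (Suc n))"
    by (rule norm_triangle_ineq4)
  also have "\<dots> = norm (a n) * \<omega> n + norm (a (Suc n)) * \<omega> (Suc n)"
    using w0[of n] w0[of "Suc n"] by (simp add: norm_mult mult.commute)
  finally have "mnorm (near_hom \<omega> n a)
      \<le> 2 * norm (tail_sum a (n+2)) + norm (a n) * \<omega> n + norm (a (Suc n)) * \<omega> (Suc n)"
    using mnorm_le_entries[of "near_hom \<omega> n a"] by (simp add: near_hom_entries)
  then show ?thesis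
    using tail_bound[OF w a, of n] wnorm_nonneg[OF a] w0 mult_nonneg_nonneg[OF norm_ge_zero w0]
    by (smt (verit) norm_ge_zero)
qed

lemma bdd_lin_near_hom:
  assumes w: "\<forall>n. \<omega> n \<ge> 1"
  shows "bdd_lin \<omega> (near_hom \<omega> n)"
  unfolding bdd_lin_def
proof (intro conjI ballI allI)
  fix a b assume "a \<in> l1w \<omega>" "b \<in> l1w \<omega>"
  then have "tail_sum (\<lambda>k. a k + b k) m = tail_sum a m + tail_sum b m" for m
    unfolding tail_sum_def
    by (intro infsum_add norm_summable_on_subset l1w_norm_summable[OF w])
  then show "near_hom \<omega> n (\<lambda>k. a k + b k) = near_hom \<omega> n a + near_hom \<omega> n b"
    by (simp add: near_hom_def vec_eq_iff algebra_simps)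
next
  fix a c
  show "near_hom \<omega> n (\<lambda>k. c * a k) = (\<chi> i j. c * (near_hom \<omega> n a $ i $ j))"
    by (simp add: near_hom_def vec_eq_iff tail_sum_def infsum_cmult_right' algebra_simps)
next
  show "\<exists>K. \<forall>a\<in>l1w \<omega>. mnorm (near_hom \<omega> n a) \<le> K * wnorm \<omega> a"
    using mnorm_near_hom[OF w] by blast
qed

lemma opn_near_hom:
  assumes "\<forall>n. \<omega> n \<ge> 1"
  shows "opn \<omega> (near_hom \<omega> n) \<le> 2"
proof (rule opn_le)
  fix a assume "a \<in> unit_ball_l1w \<omega>"
  then show "mnorm (near_hom \<omega> n a) \<le> 2"
    using mnorm_near_hom[OF assms, of a n] by (simp add: unit_ball_l1w_def)
qed


lemma small_coord_product:
  fixes x y w M :: real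
  assumes "0 \<le> x" "x \<le> 1" "0 \<le> y" "y * w \<le> 1" "M \<le> w" "0 < M"
  shows "x * y \<le> 1 / M"
proof -
  have "x * y \<le> y" using assms mult_right_mono[of x 1 y] by simp
  also have "y \<le> 1 / w" using assms by (simp add: field_simps)
  also have "\<dots> \<le> 1 / M" using assms by (simp add: frac_le)
  finally show ?thesis .
qed

text \<open>Only the upper right entry of \<open>T(a*b) - T(a)T(b)\<close> is nonzero, and it is a combination of
  four products of the coordinates \<open>n, n+1\<close> of \<open>a\<close> and \<open>b\<close>.\<close>
lemma near_hom_defect:
  assumes w: "\<forall>n. \<omega> n \<ge> 1" and a: "a \<in> unit_ball_l1w \<omega>" and b: "b \<in> unit_ball_l1w \<omega>"
  shows "mnorm (near_hom \<omega> n (minconv a b) - near_hom \<omega> n a ** near_hom \<omega> n b)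
           \<le> 4 / min (\<omega> n) (\<omega> (Suc n))"
proof -
  define M where "M = min (\<omega> n) (\<omega> (Suc n))"
  have M: "0 < M" "M \<le> \<omega> n" "M \<le> \<omega> (Suc n)" using w unfolding M_def
    by (auto simp: min_def intro: less_le_trans[OF zero_less_one])
  have w0: "\<forall>k. 0 \<le> \<omega> k" using w by (auto intro: order_trans[OF zero_le_one])
  have al: "a \<in> l1w \<omega>" and bl: "b \<in> l1w \<omega>" using a b by (auto simp: unit_ball_l1w_def)
  have aa: "(\<lambda>k. norm (a k)) summable_on UNIV" by (rule l1w_norm_summable[OF w al])
  have bb: "(\<lambda>k. norm (b k)) summable_on UNIV" by (rule l1w_norm_summable[OF w bl])
  have xa: "norm (a k) * \<omega> k \<le> 1" for k
    using coord_le_wnorm[OF al w0, of k] a by (simp add: unit_ball_l1w_def)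
  have xb: "norm (b k) * \<omega> k \<le> 1" for k
    using coord_le_wnorm[OF bl w0, of k] b by (simp add: unit_ball_l1w_def)
  have pa: "0 \<le> norm (a k) * \<omega> k" and pb: "0 \<le> norm (b k) * \<omega> k" for k using w0 by auto
  define X where "X = near_hom \<omega> n (minconv a b) - near_hom \<omega> n a ** near_hom \<omega> n b"
  define wn wn1 where "wn = complex_of_real (\<omega> n)" and "wn1 = complex_of_real (\<omega> (Suc n))"
  have diag: "X $ 1 $ 1 = 0" "X $ 2 $ 2 = 0" "X $ 2 $ 1 = 0"
    unfolding X_def
    by (simp_all add: matrix_matrix_mult_def sum_2 near_hom_entries tail_sum_minconv[OF aa bb])
  have "X $ 1 $ 2 = wn * (a n * b n) + wn * (a n * b (Suc n)) + wn * (b n * a (Suc n))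
                     - wn1 * (a (Suc n) * b (Suc n))"
    unfolding X_def wn_def wn1_def
    by (simp add: matrix_matrix_mult_def sum_2 near_hom_entries minconv_eq[OF aa bb]
        tail_sum_Suc[OF aa, of n] tail_sum_Suc[OF aa, of "Suc n"]
        tail_sum_Suc[OF bb, of n] tail_sum_Suc[OF bb, of "Suc n"] algebra_simps)
  then have "norm (X $ 1 $ 2) \<le> norm (wn * (a n * b n)) + norm (wn * (a n * b (Suc n)))
                 + norm (wn * (b n * a (Suc n))) + norm (wn1 * (a (Suc n) * b (Suc n)))"
    by (simp only:) (rule order_trans[OF norm_triangle_ineq4],
        simp add: norm_triangle_le norm_triangle_ineq)
  also have "\<dots> = (norm (a n) * \<omega> n) * norm (b n) + (norm (a n) * \<omega> n) * norm (b (Suc n))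
      + (norm (b n) * \<omega> n) * norm (a (Suc n)) + (norm (a (Suc n)) * \<omega> (Suc n)) * norm (b (Suc n))"
    using w0 by (simp add: wn_def wn1_def norm_mult)
  also have "\<dots> \<le> 1 / M + 1 / M + 1 / M + 1 / M"
    by (intro add_mono small_coord_product[OF pa xa _ xb _ M(1)] small_coord_product[OF pb xb _ xa _ M(1)])
      (simp_all add: M)
  finally have "norm (X $ 1 $ 2) \<le> 4 / M" by simp
  then show ?thesis using mnorm_le_entries[of X] diag by (simp add: X_def M_def)
qed

lemma mult_defect_near_hom:
  assumes "\<forall>n. \<omega> n \<ge> 1"
  shows "mult_defect \<omega> (near_hom \<omega> n) \<le> 4 / min (\<omega> n) (\<omega> (Suc n))"
  by (rule mult_defect_le, rule near_hom_defect[OF assms])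

section \<open>Distance from the multiplicative maps\<close>

text \<open>Two idempotent \<open>2\<times>2\<close> matrices with \<open>PQ = QP = P\<close> and nonzero upper right entries have the
  same upper right entry: the \<open>(1,2)\<close> entries of \<open>P\<^sup>2 = P\<close>, \<open>Q\<^sup>2 = Q\<close> force both traces to be 1,
  and then adding the \<open>(1,2)\<close> entries of \<open>PQ = P\<close> and \<open>QP = P\<close> gives \<open>q\<^sub>1\<^sub>2 + p\<^sub>1\<^sub>2 = 2 p\<^sub>1\<^sub>2\<close>.\<close>
lemma idempotents_upper_entry_eq:
  fixes P Q :: "complex^2^2"
  assumes PP: "P ** P = P" and QQ: "Q ** Q = Q" and PQ: "P ** Q = P" and QP: "Q ** P = P"
    and p0: "P $ 1 $ 2 \<noteq> 0" and q0: "Q $ 1 $ 2 \<noteq> 0"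
  shows "P $ 1 $ 2 = Q $ 1 $ 2"
proof -
  have entry12: "(A ** B) $ 1 $ 2 = A$1$1 * B$1$2 + A$1$2 * B$2$2" for A B :: "complex^2^2"
    by (simp add: matrix_matrix_mult_def sum_2)
  have "P$1$2 * (P$1$1 + P$2$2 - 1) = 0"
    using entry12[of P P] PP by (simp add: algebra_simps)
  then have trP: "P$1$1 + P$2$2 = 1" using p0 by simp
  have "Q$1$2 * (Q$1$1 + Q$2$2 - 1) = 0"
    using entry12[of Q Q] QQ by (simp add: algebra_simps)
  then have trQ: "Q$1$1 + Q$2$2 = 1" using q0 by simp
  have "Q$1$2 * (P$1$1 + P$2$2) + P$1$2 * (Q$1$1 + Q$2$2)
          = (P ** Q) $ 1 $ 2 + (Q ** P) $ 1 $ 2"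
    by (simp add: entry12 algebra_simps)
  then have "Q$1$2 + P$1$2 = 2 * P$1$2" using PQ QP trP trQ by simp
  then show ?thesis by simp
qed

lemma Mult_point_mass:
  assumes "S \<in> Mult \<omega>"
  shows "S (point_mass i) ** S (point_mass j) = S (point_mass (min i j))"
  using assms point_mass_in_l1w by (auto simp: Mult_def minconv_point_mass[symmetric])

lemma near_hom_upper_entry_close:
  assumes w: "\<forall>n. \<omega> n \<ge> 1" and S: "S \<in> Mult \<omega>"
    and near: "opn \<omega> (\<lambda>a. near_hom \<omega> n a - S a) < 1/2"
  shows "norm (near_hom \<omega> n (\<lambda>k. complex_of_real (1 / \<omega> j) * point_mass j k) $ 1 $ 2
               - complex_of_real (1 / \<omega> j) * S (point_mass j) $ 1 $ 2) < 1/2"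
proof -
  define u where "u = (\<lambda>k. complex_of_real (1 / \<omega> j) * point_mass j k)"
  have w0: "\<forall>k. 0 \<le> \<omega> k" and wpos: "\<forall>k. 0 < \<omega> k"
    using w by (auto intro: order_trans[OF zero_le_one] less_le_trans[OF zero_less_one])
  have bl: "bdd_lin \<omega> S" using S by (simp add: Mult_def)
  obtain C where C: "\<And>a. a \<in> unit_ball_l1w \<omega> \<Longrightarrow> mnorm (S a) \<le> C"
    using bdd_lin_bounded_on_unit_ball[OF bl w0] by blast
  have diff_bound: "mnorm (near_hom \<omega> n a - S a) \<le> 2 + C" if "a \<in> unit_ball_l1w \<omega>" for a
    using mnorm_diff_le[of "near_hom \<omega> n a" "S a"] C[OF that]
      mnorm_near_hom[OF w, of a n] that by (auto simp: unit_ball_l1w_def)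
  have ub: "u \<in> unit_ball_l1w \<omega>" unfolding u_def by (rule scaled_point_mass_in_unit_ball[OF wpos])
  have "S u = (\<chi> i k. complex_of_real (1 / \<omega> j) * S (point_mass j) $ i $ k)"
    using bl point_mass_in_l1w unfolding u_def bdd_lin_def by blast
  then have "S u $ 1 $ 2 = complex_of_real (1 / \<omega> j) * S (point_mass j) $ 1 $ 2"
    by simp
  then show ?thesis
    using entry_le_mnorm[of "near_hom \<omega> n u - S u" 1 2]
      mnorm_le_opn[where F = "\<lambda>a. near_hom \<omega> n a - S a", OF diff_bound ub] near
    by (simp add: u_def)
qed

text \<open>Every multiplicative \<open>S\<close> is at distance at least \<open>1/2\<close> from \<open>T = near_hom \<omega> n\<close>: otherwise,
  since the upper right entry of \<open>T\<close> is \<open>1\<close> on \<open>\<delta>\<^sub>n/\<omega>(n)\<close> and \<open>-1\<close> on \<open>\<delta>\<^sub>n\<^sub>+\<^sub>1/\<omega>(n+1)\<close>, the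
  idempotents \<open>P = S(\<delta>\<^sub>n)\<close>, \<open>Q = S(\<delta>\<^sub>n\<^sub>+\<^sub>1)\<close> would have upper right entries with real parts of
  opposite signs, contradicting \<open>idempotents_upper_entry_eq\<close>.\<close>
lemma dist_Mult_near_hom:
  assumes w: "\<forall>n. \<omega> n \<ge> 1"
  shows "1/2 \<le> dist_Mult \<omega> (near_hom \<omega> n)"
  unfolding dist_Mult_def
proof (rule cINF_greatest)
  show "Mult \<omega> \<noteq> {}" using zero_in_Mult by blast
next
  fix S assume S: "S \<in> Mult \<omega>"
  show "1/2 \<le> opn \<omega> (\<lambda>a. near_hom \<omega> n a - S a)"
  proof (rule ccontr)
    assume "\<not> 1/2 \<le> opn \<omega> (\<lambda>a. near_hom \<omega> n a - S a)"
    then have close: "norm (near_hom \<omega> n (\<lambda>k. complex_of_real (1 / \<omega> j) * point_mass j k) $ 1 $ 2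
                        - complex_of_real (1 / \<omega> j) * S (point_mass j) $ 1 $ 2) < 1/2" for j
      by (intro near_hom_upper_entry_close[OF w S]) simp
    have wpos: "0 < \<omega> k" for k using w less_le_trans[OF zero_less_one] by blast
    define P Q where "P = S (point_mass n)" and "Q = S (point_mass (Suc n))"
    have "norm (1 - complex_of_real (1 / \<omega> n) * P $ 1 $ 2) < 1/2"
      using close[of n] wpos[of n] by (simp add: P_def near_hom_entries point_mass_def)
    then have "Re (complex_of_real (1 / \<omega> n) * P $ 1 $ 2) > 0"
      using abs_Re_le_cmod[of "1 - complex_of_real (1 / \<omega> n) * P $ 1 $ 2"] by simp
    then have rp: "Re (P $ 1 $ 2) > 0"
      using wpos[of n] by (simp add: zero_less_divide_iff)
    have "norm (-1 - complex_of_real (1 / \<omega> (Suc n)) * Q $ 1 $ 2) < 1/2"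
      using close[of "Suc n"] wpos[of "Suc n"] by (simp add: Q_def near_hom_entries point_mass_def)
    then have "Re (complex_of_real (1 / \<omega> (Suc n)) * Q $ 1 $ 2) < 0"
      using abs_Re_le_cmod[of "-1 - complex_of_real (1 / \<omega> (Suc n)) * Q $ 1 $ 2"] by simp
    then have rq: "Re (Q $ 1 $ 2) < 0"
      using wpos[of "Suc n"] by (simp add: divide_less_0_iff)
    have "P $ 1 $ 2 = Q $ 1 $ 2"
      using Mult_point_mass[OF S, of n n] Mult_point_mass[OF S, of "Suc n" "Suc n"]
        Mult_point_mass[OF S, of n "Suc n"] Mult_point_mass[OF S, of "Suc n" n] rp rq
      by (intro idempotents_upper_entry_eq) (auto simp: P_def Q_def)
    then show False using rp rq by simp
  qed
qed

theorem theoremt: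
  fixes \<omega> :: "nat \<Rightarrow> real"
  assumes "\<forall>n. \<omega> n \<ge> 1"
    and "\<not> bdd_above (range (\<lambda>n. min (\<omega> n) (\<omega> (Suc n))))"
  shows "\<not> AMNM_pair \<omega>"
proof (rule not_AMNM_pairI[where K = 2 and \<epsilon> = "1/4"])
  fix \<delta> :: real assume \<delta>: "0 < \<delta>"
  text \<open>Choose \<open>n\<close> with \<open>min(\<omega>(n), \<omega>(n+1)) > 4/\<delta>\<close>; then \<open>near_hom \<omega> n\<close> has defect \<open>\<le> \<delta>\<close>.\<close>
  have "\<exists>x\<in>range (\<lambda>n. min (\<omega> n) (\<omega> (Suc n))). \<not> x \<le> 4 / \<delta>"
    using assms(2) unfolding bdd_above_def by blast
  then obtain n where "4 / \<delta> < min (\<omega> n) (\<omega> (Suc n))" by (auto simp: not_le)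
  moreover define M where "M = min (\<omega> n) (\<omega> (Suc n))"
  ultimately have M: "4 / \<delta> < M" by simp
  have "0 < M" using M \<delta> by (meson divide_pos_pos less_trans zero_less_numeral)
  moreover have "4 < M * \<delta>" using M \<delta> by (simp add: pos_divide_less_eq)
  ultimately have "4 / M \<le> \<delta>" by (simp add: pos_divide_le_eq mult.commute)
  then have "mult_defect \<omega> (near_hom \<omega> n) \<le> \<delta>"
    using mult_defect_near_hom[OF assms(1), of n] unfolding M_def by linarith
  moreover have "1/4 < dist_Mult \<omega> (near_hom \<omega> n)"
    using dist_Mult_near_hom[OF assms(1), of n] by linarith
  ultimately show "\<exists>T. bdd_lin \<omega> T \<and> opn \<omega> T \<le> 2 \<and> mult_defect \<omega> T \<le> \<delta> \<and> 1/4 < dist_Mult \<omega> T"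
    using bdd_lin_near_hom[OF assms(1)] opn_near_hom[OF assms(1)] by blast
qed simp_all

end
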